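(* In the algorithm DMA, the infeasible merged schedule produced in Step 3 has length at most $(\mu+1/\beta)\Delta$.
   Context: Model. $m$ servers, each a sender and a receiver. A coflow is an $m\times m$ nonnegative integer matrix $(d_{sr})$ of unit packets from sender $s$ to receiver $r$. Each job $j\in\mathcal{N}$ has $\mu_j$ coflows $\mathcal{D}^{(cj)}$ and a DAG $G_j$ (edge $c_1\to c_2$: $c_2$ may not start before $c_1$ finishes). Each slot, each sender sends at most one and each receiver receives at most one packet. $\mu=\max_j\mu_j$. Effective size of a coflow: $D=\max\{\max_s\sum_rd_{sr},\max_r\sum_sd_{sr}\}$; $\Delta$ is the effective size of $\sum_j\sum_c\mathcal{D}^{(cj)}$. BNA: polynomial-time procedure scheduling all packets of a coflow of effective size $D$ feasibly in $D$ consecutive slots. Algorithm DMA (constant $\beta>1/e$): Step 1: for each job, schedule its coflows one after another in a topological order of $G_j$, each with BNA, starting at time $0$ (isolated schedule). Step 2: delay each job's isolated schedule by an independent uniformly random integer in $[0,\Delta/\beta]$. Step 3: merge the delayed schedules slot by slot (capacity constraints may be violated). Step 4: replace each slot $t$ by $\alpha_t$ slots in which its packets are scheduled feasibly by BNA, where $\alpha_t\ge1$ is the maximum number of packets any server sends or receives in slot $t$. *)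

theory Defs
  imports Complex_Main
begin

text \<open>Servers are 0..<m. A coflow is a matrix D :: nat => nat => nat (sender, receiver),
  only entries with indices < m are relevant. Job j has coflows 0..<mu j, with
  matrices d j c. A packet of job j is a tuple (c, s, r, k) with k < d j c s r
  (the k-th unit packet of coflow c from sender s to receiver r).\<close>

definition eff_size :: "nat \<Rightarrow> (nat \<Rightarrow> nat \<Rightarrow> nat) \<Rightarrow> nat" where
  "eff_size m D = max (Max (insert 0 ((\<lambda>s. \<Sum>r<m. D s r) ` {..<m})))
                      (Max (insert 0 ((\<lambda>r. \<Sum>s<m. D s r) ` {..<m})))"

definition total_eff_size ::
  "nat \<Rightarrow> 'j set \<Rightarrow> ('j \<Rightarrow> nat) \<Rightarrow> ('j \<Rightarrow> nat \<Rightarrow> nat \<Rightarrow> nat \<Rightarrow> nat) \<Rightarrow> nat" where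
  "total_eff_size m N mu d = eff_size m (\<lambda>s r. \<Sum>j\<in>N. \<Sum>c<mu j. d j c s r)"

definition max_mu :: "'j set \<Rightarrow> ('j \<Rightarrow> nat) \<Rightarrow> nat" where
  "max_mu N mu = Max (insert 0 (mu ` N))"

definition coflow_packets :: "nat \<Rightarrow> (nat \<Rightarrow> nat \<Rightarrow> nat \<Rightarrow> nat) \<Rightarrow> nat \<Rightarrow> (nat \<times> nat \<times> nat \<times> nat) set" where
  "coflow_packets m dj c = {(c', s, r, k). c' = c \<and> s < m \<and> r < m \<and> k < dj c s r}"

definition job_packets :: "nat \<Rightarrow> nat \<Rightarrow> (nat \<Rightarrow> nat \<Rightarrow> nat \<Rightarrow> nat) \<Rightarrow> (nat \<times> nat \<times> nat \<times> nat) set" where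
  "job_packets m muj dj = (\<Union>c<muj. coflow_packets m dj c)"

definition feasible_on :: "(nat \<times> nat \<times> nat \<times> nat) set \<Rightarrow> (nat \<times> nat \<times> nat \<times> nat \<Rightarrow> nat) \<Rightarrow> bool" where
  "feasible_on A \<sigma> \<longleftrightarrow>
     (\<forall>p\<in>A. \<forall>q\<in>A. \<sigma> p = \<sigma> q \<longrightarrow> fst (snd p) = fst (snd q) \<longrightarrow> p = q) \<and>
     (\<forall>p\<in>A. \<forall>q\<in>A. \<sigma> p = \<sigma> q \<longrightarrow> fst (snd (snd p)) = fst (snd (snd q)) \<longrightarrow> p = q)"

text \<open>Step 1 of DMA for one job: the coflows are processed one after another in a
  topological order of the DAG Gj (pos c = position of coflow c in the order);
  coflow c occupies the eff_size consecutive slots starting after all coflows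
  earlier in the order, and its packets are scheduled feasibly there (as BNA does).\<close>
definition isolated_schedule ::
  "nat \<Rightarrow> nat \<Rightarrow> (nat \<Rightarrow> nat \<Rightarrow> nat \<Rightarrow> nat) \<Rightarrow> (nat \<times> nat) set
     \<Rightarrow> (nat \<times> nat \<times> nat \<times> nat \<Rightarrow> nat) \<Rightarrow> bool" where
  "isolated_schedule m muj dj Gj \<sigma> \<longleftrightarrow>
     (\<exists>pos. bij_betw pos {..<muj} {..<muj} \<and>
        (\<forall>(c1, c2)\<in>Gj. pos c1 < pos c2) \<and>
        (\<forall>c<muj.
           let start = (\<Sum>c'\<in>{c'. c' < muj \<and> pos c' < pos c}. eff_size m (dj c')) in
           (\<forall>p\<in>coflow_packets m dj c. start \<le> \<sigma> p \<and> \<sigma> p < start + eff_size m (dj c)) \<and>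
           feasible_on (coflow_packets m dj c) \<sigma>))"

text \<open>Length of the merged (Step 3) schedule: job j's isolated schedule sigma j
  delayed by delta j; the length is the number of slots up to the last used slot.\<close>
definition merged_length ::
  "nat \<Rightarrow> 'j set \<Rightarrow> ('j \<Rightarrow> nat) \<Rightarrow> ('j \<Rightarrow> nat \<Rightarrow> nat \<Rightarrow> nat \<Rightarrow> nat)
     \<Rightarrow> ('j \<Rightarrow> nat \<times> nat \<times> nat \<times> nat \<Rightarrow> nat) \<Rightarrow> ('j \<Rightarrow> nat) \<Rightarrow> nat" where
  "merged_length m N mu d \<sigma> \<delta> =
     Max (insert 0 {\<delta> j + \<sigma> j p + 1 | j p. j \<in> N \<and> p \<in> job_packets m (mu j) (d j)})"

end

theory Submission
  imports Defs
begin

text \<open>Every coflow of a job has effective size at most \<open>\<Delta>\<close>, so the isolated schedule of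
  a job with \<open>\<mu>\<^sub>j\<close> coflows ends by slot \<open>\<mu>\<^sub>j \<Delta> \<le> \<mu> \<Delta>\<close>; delaying it by at most
  \<open>\<Delta>/\<beta>\<close> slots moves its end to at most \<open>(\<mu> + 1/\<beta>) \<Delta>\<close>.\<close>

lemma Max_insert_0_image_mono:
  fixes f g :: "'a \<Rightarrow> nat"
  assumes "finite A" "\<And>x. x \<in> A \<Longrightarrow> f x \<le> g x"
  shows "Max (insert 0 (f ` A)) \<le> Max (insert 0 (g ` A))"
proof -
  have "f x \<le> Max (insert 0 (g ` A))" if "x \<in> A" for x
    using assms that by (meson Max_ge finite_imageI finite_insert image_eqI insertCI order_trans)
  then show ?thesis
    using assms(1) by (simp add: Max_le_iff)
qed

lemma eff_size_mono:
  assumes "\<And>s r. s < m \<Longrightarrow> r < m \<Longrightarrow> D s r \<le> E s r"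
  shows "eff_size m D \<le> eff_size m E"
  unfolding eff_size_def
  by (intro max.mono Max_insert_0_image_mono sum_mono) (simp_all add: assms)

lemma eff_size_coflow_le_total_eff_size:
  assumes "finite N" "j \<in> N" "c < mu j"
  shows "eff_size m (d j c) \<le> total_eff_size m N mu d"
  unfolding total_eff_size_def
proof (rule eff_size_mono)
  fix s r
  have "d j c s r \<le> (\<Sum>c<mu j. d j c s r)"
    using assms(3) by (intro member_le_sum) auto
  also have "\<dots> \<le> (\<Sum>j\<in>N. \<Sum>c<mu j. d j c s r)"
    using assms(1,2) by (intro member_le_sum) auto
  finally show "d j c s r \<le> (\<Sum>j\<in>N. \<Sum>c<mu j. d j c s r)" .
qed

lemma isolated_schedule_slot_less:
  assumes "isolated_schedule m muj dj Gj \<sigma>" "p \<in> job_packets m muj dj"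
  shows "\<sigma> p < (\<Sum>c<muj. eff_size m (dj c))"
proof -
  from assms(2) obtain c where c: "c < muj" "p \<in> coflow_packets m dj c"
    unfolding job_packets_def by auto
  obtain pos :: "nat \<Rightarrow> nat" where slots: "\<forall>c<muj.
      (\<forall>p\<in>coflow_packets m dj c.
         (\<Sum>c'\<in>{c'. c' < muj \<and> pos c' < pos c}. eff_size m (dj c')) \<le> \<sigma> p \<and>
         \<sigma> p < (\<Sum>c'\<in>{c'. c' < muj \<and> pos c' < pos c}. eff_size m (dj c')) + eff_size m (dj c)) \<and>
      feasible_on (coflow_packets m dj c) \<sigma>"
    using assms(1) unfolding isolated_schedule_def Let_def by (elim exE conjE) (rule that)
  define before where "before = {c'. c' < muj \<and> pos c' < pos c}"
  have "\<sigma> p < (\<Sum>c'\<in>before. eff_size m (dj c')) + eff_size m (dj c)"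
    using slots c unfolding before_def by blast
  also have "\<dots> = (\<Sum>c'\<in>insert c before. eff_size m (dj c'))"
    by (subst sum.insert) (auto simp: before_def)
  also have "\<dots> \<le> (\<Sum>c'<muj. eff_size m (dj c'))"
    using c(1) by (intro sum_mono2) (auto simp: before_def)
  finally show ?thesis .
qed

lemma merged_length_le:
  fixes B :: real
  assumes "0 \<le> B"
    and "\<And>j p. j \<in> N \<Longrightarrow> p \<in> job_packets m (mu j) (d j) \<Longrightarrow> real (\<delta> j + \<sigma> j p + 1) \<le> B"
  shows "real (merged_length m N mu d \<sigma> \<delta>) \<le> B"
proof -
  define ends where "ends = {\<delta> j + \<sigma> j p + 1 | j p. j \<in> N \<and> p \<in> job_packets m (mu j) (d j)}"
  have ends_le: "x \<le> nat \<lfloor>B\<rfloor>" if "x \<in> ends" for x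
    using that assms(2) by (auto simp: ends_def le_nat_floor)
  then have "finite ends"
    by (auto intro: finite_subset[of _ "{..nat \<lfloor>B\<rfloor>}"])
  with ends_le have "merged_length m N mu d \<sigma> \<delta> \<le> nat \<lfloor>B\<rfloor>"
    unfolding merged_length_def ends_def [symmetric] by (simp add: Max_le_iff)
  then have "real (merged_length m N mu d \<sigma> \<delta>) \<le> real (nat \<lfloor>B\<rfloor>)"
    by simp
  also have "\<dots> \<le> B"
    using assms(1) by (rule of_nat_floor)
  finally show ?thesis .
qed

theorem lemma3:
  fixes m :: nat and N :: "'j set" and mu :: "'j \<Rightarrow> nat"
    and d :: "'j \<Rightarrow> nat \<Rightarrow> nat \<Rightarrow> nat \<Rightarrow> nat"
    and G :: "'j \<Rightarrow> (nat \<times> nat) set"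
    and \<beta> :: real
    and \<sigma> :: "'j \<Rightarrow> nat \<times> nat \<times> nat \<times> nat \<Rightarrow> nat"
    and \<delta> :: "'j \<Rightarrow> nat"
  assumes "finite N"
    and "\<beta> > 1 / exp 1"
    and "\<And>j. j \<in> N \<Longrightarrow> G j \<subseteq> {..<mu j} \<times> {..<mu j} \<and> acyclic (G j)"
    and "\<And>j. j \<in> N \<Longrightarrow> isolated_schedule m (mu j) (d j) (G j) (\<sigma> j)"
    and "\<And>j. j \<in> N \<Longrightarrow> real (\<delta> j) \<le> real (total_eff_size m N mu d) / \<beta>"
  shows "real (merged_length m N mu d \<sigma> \<delta>)
           \<le> (real (max_mu N mu) + 1 / \<beta>) * real (total_eff_size m N mu d)"
proof (rule merged_length_le)
  let ?\<Delta> = "total_eff_size m N mu d"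
  have "\<beta> > 0"
    using assms(2) by (rule less_trans[rotated]) simp
  then show "0 \<le> (real (max_mu N mu) + 1 / \<beta>) * real ?\<Delta>"
    by simp
  fix j p
  assume j: "j \<in> N" and p: "p \<in> job_packets m (mu j) (d j)"
  have "\<sigma> j p + 1 \<le> (\<Sum>c<mu j. eff_size m (d j c))"
    using isolated_schedule_slot_less[OF assms(4)[OF j] p] by simp
  also have "\<dots> \<le> (\<Sum>c<mu j. ?\<Delta>)"
    using eff_size_coflow_le_total_eff_size[OF assms(1) j] by (intro sum_mono) simp
  also have "\<dots> = mu j * ?\<Delta>"
    by simp
  also have "\<dots> \<le> max_mu N mu * ?\<Delta>"
    unfolding max_mu_def using assms(1) j by (intro mult_right_mono Max_ge) auto
  finally have "real (\<sigma> j p + 1) \<le> real (max_mu N mu) * real ?\<Delta>"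
    by (metis of_nat_le_iff of_nat_mult)
  with assms(5)[OF j] show "real (\<delta> j + \<sigma> j p + 1) \<le> (real (max_mu N mu) + 1 / \<beta>) * real ?\<Delta>"
    by (simp add: algebra_simps)
qed

end
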